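(* Let $\alpha\in\mathbb{N}_0$ and let $L_{2\alpha+4,x}^{\alpha}y(x)=(-1)^{\alpha+1}e^x x\,D_x^{\alpha+2}\{e^{-x}D_x^{\alpha+2}[x^{\alpha+1}y(x)]\}$. Then for all $n\in\mathbb{N}$, $$\big[L_{2\alpha+4,x}^{\alpha}+(n)_{\alpha+2}\big]T_n^{\alpha}(x)=0,\qquad 0\le x<\infty.$$
   Context: $D_x^i$ is the $i$-fold derivative; $(a)_k$ is the Pochhammer symbol. $L_n^{\gamma}(x)=\frac{(\gamma+1)_n}{n!}{}_1F_1(-n;\gamma+1;x)$ are the Laguerre polynomials, and for $n\ge1$, $T_n^{\alpha}(x)=-t_n^{\alpha}\,x\,L_{n-1}^{\alpha+2}(x)$ with $t_n^{\alpha}=(\alpha+2)_{n-1}/n!$. *)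

theory Defs
  imports "HOL-Analysis.Analysis"
begin

text \<open>Terminating confluent hypergeometric series 1F1(-n; b; x)
  = sum over k = 0..n of (-n)_k / ((b)_k k!) x^k (terms with k > n vanish).\<close>
definition hyp1F1_neg :: "nat \<Rightarrow> real \<Rightarrow> real \<Rightarrow> real" where
  "hyp1F1_neg n b x =
     (\<Sum>k\<le>n. pochhammer (- real n) k / (pochhammer b k * fact k) * x ^ k)"

definition laguerre :: "nat \<Rightarrow> real \<Rightarrow> real \<Rightarrow> real" where
  "laguerre n \<gamma> x = pochhammer (\<gamma> + 1) n / fact n * hyp1F1_neg n (\<gamma> + 1) x"

definition tcoef :: "nat \<Rightarrow> nat \<Rightarrow> real" where
  "tcoef \<alpha> n = pochhammer (real \<alpha> + 2) (n - 1) / fact n"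

definition Tpoly :: "nat \<Rightarrow> nat \<Rightarrow> real \<Rightarrow> real" where
  "Tpoly \<alpha> n x = - tcoef \<alpha> n * x * laguerre (n - 1) (real \<alpha> + 2) x"

definition Lop :: "nat \<Rightarrow> (real \<Rightarrow> real) \<Rightarrow> real \<Rightarrow> real" where
  "Lop \<alpha> y x = (-1) ^ (\<alpha> + 1) * exp x * x *
     (deriv ^^ (\<alpha> + 2)) (\<lambda>t. exp (- t) * (deriv ^^ (\<alpha> + 2)) (\<lambda>s. s ^ (\<alpha> + 1) * y s) t) x"

end

theory Submission
  imports Defs "HOL-Computational_Algebra.Polynomial"
begin

text \<open>Put a = \<alpha> + 2, m = n - 1 and write L_b for the Laguerre polynomial L_m^b, so that
  x^(\<alpha>+1) T_n^\<alpha>(x) = -t_n^\<alpha> x^a L_a(x). Two classical identities do the work: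
  D^a [x^a L_a] = (m+1)_a L_0, and (D - 1) L_b = -L_(b+1), which iterated gives
  D^a [e^(-x) L_0] = (-1)^a e^(-x) L_a. Hence the operator multiplies T_n^\<alpha> by -(n)_a.
  The identity holds for every real x.\<close>

lemma pochhammer_of_nat_plus_1:
  "pochhammer (of_nat b + 1 :: 'a :: field_char_0) m = fact (b + m) / fact b"
  using pochhammer_product'[of "1 :: 'a" b m]
  by (simp add: pochhammer_fact[symmetric] add.commute)

lemma pochhammer_minus_of_nat:
  assumes "k \<le> m"
  shows "pochhammer (- of_nat m :: 'a :: field_char_0) k = (-1) ^ k * fact m / fact (m - k)"
proof -
  have "pochhammer (- of_nat m :: 'a) k = (-1) ^ k * pochhammer (of_nat (m - k) + 1) k"
    using assms by (simp add: pochhammer_minus of_nat_diff)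
  also have "\<dots> = (-1) ^ k * fact m / fact (m - k)"
    using assms by (simp only: pochhammer_of_nat_plus_1 le_add_diff_inverse2 times_divide_eq_right)
  finally show ?thesis .
qed

definition laguerre_coeff :: "nat \<Rightarrow> nat \<Rightarrow> nat \<Rightarrow> real" where
  "laguerre_coeff b m k = (if k \<le> m then (-1) ^ k * real (m + b choose (m - k)) / fact k else 0)"

definition laguerre_poly :: "nat \<Rightarrow> nat \<Rightarrow> real poly" where
  "laguerre_poly b m = (\<Sum>k\<le>m. monom (laguerre_coeff b m k) k)"

lemma coeff_laguerre_poly: "coeff (laguerre_poly b m) k = laguerre_coeff b m k"
  by (simp add: laguerre_poly_def coeff_sum coeff_monom laguerre_coeff_def)

lemma laguerre_eq_poly_laguerre_poly: "laguerre m (real b) x = poly (laguerre_poly b m) x"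
proof -
  have "pochhammer (real b + 1) m / fact m *
      (pochhammer (- real m) k / (pochhammer (real b + 1) k * fact k) * x ^ k)
      = laguerre_coeff b m k * x ^ k" if "k \<le> m" for k
  proof -
    have "real (m + b choose (m - k)) = fact (m + b) / (fact (m - k) * fact (b + k))"
      using that by (simp add: binomial_fact)
    then show ?thesis
      using that
      unfolding pochhammer_of_nat_plus_1 pochhammer_minus_of_nat[OF that] laguerre_coeff_def
      by (simp add: field_simps add.commute)
  qed
  then show ?thesis
    by (simp add: laguerre_def hyp1F1_neg_def sum_distrib_left laguerre_poly_def poly_sum
        poly_monom)
qed

text \<open>Coefficientwise this is Pascal's rule for \<open>m + b + 1 choose m - k\<close>.\<close>

lemma pderiv_laguerre_poly:
  "pderiv (laguerre_poly b m) - laguerre_poly b m = - laguerre_poly (Suc b) m"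
proof (rule poly_eqI)
  fix k
  have "real (Suc k) * laguerre_coeff b m (Suc k) - laguerre_coeff b m k
      = - laguerre_coeff (Suc b) m k"
  proof (cases "k < m")
    case True
    then obtain j where j: "m - k = Suc j" "m - Suc k = j"
      by (metis Suc_diff_Suc)
    have "real (m + Suc b choose (m - k)) = real (m + b choose j) + real (m + b choose Suc j)"
      using j by simp
    moreover have "real (Suc k) * ((-1) ^ Suc k * real (m + b choose j) / fact (Suc k))
        = - ((-1) ^ k * real (m + b choose j) / fact k)"
      by (simp add: fact_Suc field_simps del: of_nat_Suc)
    ultimately show ?thesis
      using True j by (simp add: laguerre_coeff_def field_simps del: of_nat_Suc)
  next
    case False
    then show ?thesis
      by (cases "k = m") (simp_all add: laguerre_coeff_def)
  qed
  then show "coeff (pderiv (laguerre_poly b m) - laguerre_poly b m) k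
      = coeff (- laguerre_poly (Suc b) m) k"
    by (simp add: coeff_pderiv coeff_laguerre_poly)
qed

lemma higher_pderiv_monom_mult_laguerre_poly:
  "(pderiv ^^ a) (monom 1 a * laguerre_poly a m)
     = smult (pochhammer (real m + 1) a) (laguerre_poly 0 m)"
proof (rule poly_eqI)
  fix k
  have "pochhammer (real (Suc k)) a * laguerre_coeff a m k
      = pochhammer (real m + 1) a * laguerre_coeff 0 m k"
  proof (cases "k \<le> m")
    case True
    have binomials: "real (a + m choose (m - k)) = fact (m + a) / (fact (m - k) * fact (a + k))"
      "real (m choose (m - k)) = fact m / (fact (m - k) * fact k)"
      using True by (simp_all add: binomial_fact add.commute)
    have pochhammers: "pochhammer (1 + real k) a = fact (k + a) / fact k"
      "pochhammer (1 + real m) a = fact (m + a) / fact m"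
      using pochhammer_of_nat_plus_1[where 'a = real] by (simp_all add: add.commute)
    show ?thesis
      using True by (simp add: laguerre_coeff_def binomials pochhammers field_simps add.commute)
  qed (simp add: laguerre_coeff_def)
  then show "coeff ((pderiv ^^ a) (monom 1 a * laguerre_poly a m)) k
      = coeff (smult (pochhammer (real m + 1) a) (laguerre_poly 0 m)) k"
    by (simp add: coeff_higher_pderiv coeff_monom_mult coeff_laguerre_poly)
qed

lemma higher_deriv_poly: "(deriv ^^ j) (poly p) = poly ((pderiv ^^ j) (p :: real poly))"
proof (induction j)
  case (Suc j)
  show ?case
    unfolding funpow.simps comp_def Suc.IH
    by (simp add: fun_eq_iff DERIV_imp_deriv[OF poly_DERIV])
qed simp

lemma deriv_exp_neg_mult_poly:
  "deriv (\<lambda>t. exp (- t) * poly p t) = (\<lambda>t. exp (- t) * poly (pderiv p - p) t :: real)"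
proof
  fix t :: real
  have "((\<lambda>t. exp (- t) * poly p t) has_real_derivative
      exp (- t) * (-1) * poly p t + exp (- t) * poly (pderiv p) t) (at t)"
    by (auto intro!: derivative_eq_intros poly_DERIV)
  then show "deriv (\<lambda>t. exp (- t) * poly p t) t = exp (- t) * poly (pderiv p - p) t"
    by (simp add: DERIV_imp_deriv algebra_simps)
qed

lemma higher_deriv_exp_neg_mult_laguerre_poly:
  "(deriv ^^ a) (\<lambda>t. exp (- t) * poly (smult c (laguerre_poly b m)) t)
     = (\<lambda>t. exp (- t) * poly (smult (c * (-1) ^ a) (laguerre_poly (b + a) m)) t)"
proof (induction a)
  case (Suc a)
  have "pderiv (smult d (laguerre_poly (b + a) m)) - smult d (laguerre_poly (b + a) m)
      = smult (- d) (laguerre_poly (b + Suc a) m)" for d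
    using pderiv_laguerre_poly[of "b + a" m]
    by (simp add: pderiv_smult smult_diff_right[symmetric])
  then show ?case
    unfolding funpow.simps comp_def Suc.IH deriv_exp_neg_mult_poly by simp
qed simp

theorem corollary2p2:
  fixes \<alpha> n :: nat and x :: real
  assumes "n \<ge> 1" and "0 \<le> x"
  shows "Lop \<alpha> (Tpoly \<alpha> n) x + pochhammer (real n) (\<alpha> + 2) * Tpoly \<alpha> n x = 0"
proof -
  define m a t P where "m = n - 1" and "a = \<alpha> + 2" and "t = tcoef \<alpha> n"
    and "P = pochhammer (real n) a"
  have T: "Tpoly \<alpha> n s = - t * s * poly (laguerre_poly a m) s" for s
    using laguerre_eq_poly_laguerre_poly[of m a s]
    by (simp add: Tpoly_def t_def m_def a_def add.commute)
  have "(\<lambda>s. s ^ (\<alpha> + 1) * Tpoly \<alpha> n s) = poly (smult (- t) (monom 1 a * laguerre_poly a m))"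
    by (simp add: fun_eq_iff T a_def poly_monom)
  then have inner: "(deriv ^^ a) (\<lambda>s. s ^ (\<alpha> + 1) * Tpoly \<alpha> n s)
      = poly (smult (- t * P) (laguerre_poly 0 m))"
    using assms(1)
    by (simp add: higher_deriv_poly higher_pderiv_smult higher_pderiv_monom_mult_laguerre_poly
        P_def m_def of_nat_diff del: smult_minus_left)
  have "Lop \<alpha> (Tpoly \<alpha> n) x
      = (-1) ^ (\<alpha> + 1) * (exp x * exp (- x)) * x * (- t * P * (-1) ^ a)
        * poly (laguerre_poly a m) x"
    unfolding Lop_def a_def[symmetric] inner higher_deriv_exp_neg_mult_laguerre_poly by simp
  also have "\<dots> = t * P * x * poly (laguerre_poly a m) x"
    by (simp add: exp_minus a_def)
  finally show ?thesis
    by (simp add: T P_def a_def)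
qed

end
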